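(* Let $a<b$ be integers, $\sigma=(\sigma_x)_{x\in[a,b]\cap\mathbb{Z}}$ arbitrary strictly positive deterministic numbers, and $X^{a,b}$ the inhomogeneous CTRW on $[a,b]\cap\mathbb{Z}$ in the trapping landscape $\sigma$. For each $x\in[a,b)\cap\mathbb{Z}$, $z\in[x,b)\cap\mathbb{Z}$ and $t>0$, \[ P^{a,b}_x(\tau_b\le t)\le \frac{t}{2(b-z)\sigma_z}. \] Moreover, for each $x\in(a,b)\cap\mathbb{Z}$ and $t>0$, \[ P^{a,b}_x(\tau\le t)\le\frac{t}{\min\{x-a,b-x\}\,\sigma_x}. \]
   Context: For integers $a<b$ and positive numbers $(\sigma_x)_{x\in[a,b]\cap\mathbb{Z}}$, the inhomogeneous CTRW $X^{a,b}$ on $[a,b]\cap\mathbb{Z}$ in the trapping landscape $\sigma$ is the continuous-time Markov chain on $[a,b]\cap\mathbb{Z}$ which jumps from $x$ to each nearest neighbour $y$ of $x$ within $[a,b]\cap\mathbb{Z}$ at rate $1/(2\sigma_x)$ (reflecting at $a$ and $b$). $P^{a,b}_x$ is its law started from $x$. $\tau_a:=\inf\{s:X^{a,b}_s=a\}$, $\tau_b:=\inf\{s:X^{a,b}_s=b\}$, $\tau:=\min\{\tau_a,\tau_b\}$. *)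

theory Defs
  imports "HOL-Probability.Probability"
begin

text \<open>Construction of the inhomogeneous CTRW on the integer interval from a to b
(reflecting at a and b) by the standard jump-chain / holding-time construction.\<close>

definition ctrw_step_measure :: "(bool \<times> real) measure" where
  "ctrw_step_measure =
     measure_pmf (bernoulli_pmf (1/2)) \<Otimes>\<^sub>M density lborel (exponential_density 1)"

definition ctrw_space :: "(nat \<Rightarrow> bool \<times> real) measure" where
  "ctrw_space = PiM UNIV (\<lambda>_::nat. ctrw_step_measure)"

definition ctrw_next :: "int \<Rightarrow> int \<Rightarrow> int \<Rightarrow> bool \<Rightarrow> int" where
  "ctrw_next a b y c =
     (if y = a then a + 1 else if y = b then b - 1 else if c then y + 1 else y - 1)"

fun ctrw_chain :: "int \<Rightarrow> int \<Rightarrow> int \<Rightarrow> (nat \<Rightarrow> bool \<times> real) \<Rightarrow> nat \<Rightarrow> int" where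
  "ctrw_chain a b x \<omega> 0 = x"
| "ctrw_chain a b x \<omega> (Suc n) = ctrw_next a b (ctrw_chain a b x \<omega> n) (fst (\<omega> n))"

text \<open>Holding time at y: total jump rate is 1/sigma y at interior sites and
1/(2 sigma y) at the endpoints, so the holding time is (mean) times an Exp(1) variable.\<close>
definition ctrw_hold :: "int \<Rightarrow> int \<Rightarrow> (int \<Rightarrow> real) \<Rightarrow> int \<Rightarrow> real \<Rightarrow> real" where
  "ctrw_hold a b \<sigma> y e = (if y = a \<or> y = b then 2 * \<sigma> y else \<sigma> y) * e"

definition ctrw_jump_time ::
  "int \<Rightarrow> int \<Rightarrow> (int \<Rightarrow> real) \<Rightarrow> int \<Rightarrow> (nat \<Rightarrow> bool \<times> real) \<Rightarrow> nat \<Rightarrow> real" where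
  "ctrw_jump_time a b \<sigma> x \<omega> n =
     (\<Sum>k<n. ctrw_hold a b \<sigma> (ctrw_chain a b x \<omega> k) (snd (\<omega> k)))"

text \<open>P_x^{a,b}(tau_S \<le> t), where tau_S is the hitting time of the set S:
the process X sits at ctrw_chain n on [jump_time n, jump_time (n+1)), so
tau_S \<le> t iff some n has chain value in S and jump time \<le> t.\<close>
definition ctrw_hit_prob ::
  "int \<Rightarrow> int \<Rightarrow> (int \<Rightarrow> real) \<Rightarrow> int \<Rightarrow> int set \<Rightarrow> real \<Rightarrow> real" where
  "ctrw_hit_prob a b \<sigma> x S t =
     measure ctrw_space
       {\<omega> \<in> space ctrw_space. \<exists>n. ctrw_chain a b x \<omega> n \<in> S \<and> ctrw_jump_time a b \<sigma> x \<omega> n \<le> t}"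

end

theory Submission
  imports Defs
begin

text \<open>Let \<open>c\<close> be a weight on \<open>[a,b]\<close> with values in \<open>[0,1]\<close>, vanishing on the target set \<open>S\<close>,
such that at every site \<open>y \<notin> S\<close> with mean holding time \<open>h\<^sub>y\<close> and successors \<open>y\<^sub>+, y\<^sub>-\<close>
  \<open>c(y) (1 - \<theta> h\<^sub>y) \<le> (c(y\<^sub>+) + c(y\<^sub>-)) / 2\<close>,
a discrete form of \<open>L c \<ge> -\<theta> c\<close> for the generator \<open>L\<close>. Then \<open>u(y,s) = 1 - c(y) exp(-\<theta> s)\<close>
(and \<open>0\<close> for \<open>s < 0\<close>) is a supersolution of the first-step equation for the hitting
probability: averaging \<open>u\<close> over the coin and the exponential holding time of one step gives at
most \<open>u\<close>. By induction on the number of jumps, \<open>P\<^sub>y(\<tau>\<^sub>S \<le> s) \<le> u(y,s)\<close>, and if \<open>c(x) = 1\<close>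
this is at most \<open>1 - exp(-\<theta> t) \<le> \<theta> t\<close>. For the first bound \<open>c\<close> equals \<open>1\<close> up to \<open>z\<close> and decreases
linearly to \<open>0\<close> at \<open>b\<close>, with \<open>\<theta> = 1/(2(b-z)\<sigma>\<^sub>z)\<close>; for the second it is the tent peaking at \<open>x\<close>
and vanishing at \<open>a\<close> and \<open>b\<close>, with \<open>\<theta> = 1/(min(x-a, b-x) \<sigma>\<^sub>x)\<close>. Both weights are harmonic
except at the kink, where the term \<open>\<theta> h\<^sub>y\<close> pays for the defect.\<close>

definition hit_majorant :: "real \<Rightarrow> real \<Rightarrow> real \<Rightarrow> real" where
  "hit_majorant \<theta> c s = (if s < 0 then 0 else 1 - c * exp (- \<theta> * s))"

lemma hit_majorant_nonneg: "0 \<le> \<theta> \<Longrightarrow> 0 \<le> c \<Longrightarrow> c \<le> 1 \<Longrightarrow> 0 \<le> hit_majorant \<theta> c s"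
  by (auto simp: hit_majorant_def intro!: mult_le_one)

lemma hit_majorant_midpoint:
  "(hit_majorant \<theta> c\<^sub>1 s + hit_majorant \<theta> c\<^sub>2 s) / 2 = hit_majorant \<theta> ((c\<^sub>1 + c\<^sub>2) / 2) s"
  by (simp add: hit_majorant_def field_simps)

lemma hit_majorant_one_le: "0 \<le> \<theta> \<Longrightarrow> 0 \<le> t \<Longrightarrow> hit_majorant \<theta> 1 t \<le> \<theta> * t"
  using exp_ge_add_one_self[of "- \<theta> * t"] by (simp add: hit_majorant_def)

lemma nn_integral_exp_diff_Icc:
  fixes k r C :: real
  assumes "0 < k" "0 \<le> r" and "\<And>e. 0 \<le> e \<Longrightarrow> e \<le> r \<Longrightarrow> C * exp (- k * e) \<le> exp (- e)"
  shows "(\<integral>\<^sup>+e. ennreal (exp (- e) - C * exp (- k * e)) * indicator {0..r} e \<partial>lborel)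
       = ennreal (1 - exp (- r) - C * (1 - exp (- k * r)) / k)"
proof -
  let ?F = "\<lambda>e. C * exp (- k * e) / k - exp (- e)"
  have "(\<integral>\<^sup>+e. ennreal (exp (- e) - C * exp (- k * e)) * indicator {0..r} e \<partial>lborel) = ?F r - ?F 0"
    using assms by (intro nn_integral_FTC_Icc) (auto intro!: derivative_eq_intros)
  also have "?F r - ?F 0 = 1 - exp (- r) - C * (1 - exp (- k * r)) / k"
    using \<open>0 < k\<close> by (simp add: field_simps)
  finally show ?thesis .
qed

lemma nn_integral_exponential_hit_majorant:
  fixes H \<theta> c s :: real
  assumes H: "0 < H"
  shows "(\<integral>\<^sup>+e. hit_majorant \<theta> c (s - H * e) \<partial>density lborel (exponential_density 1))
       = (\<integral>\<^sup>+e. ennreal (exp (- e) - c * exp (- \<theta> * s) * exp (- (1 - \<theta> * H) * e))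
            * indicator {0..s / H} e \<partial>lborel)"
proof -
  have "(\<integral>\<^sup>+e. hit_majorant \<theta> c (s - H * e) \<partial>density lborel (exponential_density 1))
      = (\<integral>\<^sup>+e. ennreal (exponential_density 1 e) * hit_majorant \<theta> c (s - H * e) \<partial>lborel)"
    by (rule nn_integral_density) (auto simp: hit_majorant_def)
  also have "\<dots> = (\<integral>\<^sup>+e. ennreal (exp (- e) - c * exp (- \<theta> * s) * exp (- (1 - \<theta> * H) * e))
      * indicator {0..s / H} e \<partial>lborel)"
  proof (intro nn_integral_cong)
    fix e :: real
    have "exp (- e) * exp (- \<theta> * (s - H * e)) = exp (- \<theta> * s) * exp (- (1 - \<theta> * H) * e)"
      by (simp add: mult_exp_exp algebra_simps)
    then show "ennreal (exponential_density 1 e) * ennreal (hit_majorant \<theta> c (s - H * e))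
        = ennreal (exp (- e) - c * exp (- \<theta> * s) * exp (- (1 - \<theta> * H) * e)) * indicator {0..s / H} e"
      using H by (auto simp: exponential_density_def hit_majorant_def field_simps
          ennreal_mult'[symmetric] indicator_def)
  qed
  finally show ?thesis .
qed

lemma one_minus_exp_drift_le:
  fixes k r c c' D :: real
  assumes k: "0 < k" and r: "0 \<le> r" and c: "c \<le> 1" and drift: "c * k \<le> c'"
    and D: "0 \<le> D" "D * exp (- k * r) = exp (- r)"
  shows "1 - exp (- r) - c' * D * (1 - exp (- k * r)) / k \<le> 1 - c * D"
proof -
  have "c * k * D \<le> c' * D" using drift D by (simp add: mult_right_mono)
  then have "c * D \<le> c' * D / k" using k by (simp add: field_simps)
  moreover have "0 \<le> 1 - exp (- k * r)" using k r by simp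
  ultimately have "c * D * (1 - exp (- k * r)) \<le> c' * D * (1 - exp (- k * r)) / k"
    by (metis mult_right_mono times_divide_eq_left mult.commute)
  moreover have "c * D * (1 - exp (- k * r)) = c * D - c * exp (- r)"
    using D by (simp add: right_diff_distrib)
  moreover have "c * exp (- r) \<le> exp (- r)" using c by simp
  ultimately show ?thesis by linarith
qed

lemma nn_integral_exponential_hit_majorant_le_short_hold:
  fixes H \<theta> c c' s :: real
  assumes H: "0 < H" and \<theta>: "0 \<le> \<theta>" "\<theta> * H < 1" and c: "c \<le> 1" and c': "0 \<le> c'" "c' \<le> 1"
    and drift: "c * (1 - \<theta> * H) \<le> c'" and s: "0 \<le> s"
  shows "(\<integral>\<^sup>+e. hit_majorant \<theta> c' (s - H * e) \<partial>density lborel (exponential_density 1))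
       \<le> ennreal (1 - c * exp (- \<theta> * s))"
proof -
  define r k where "r = s / H" and "k = 1 - \<theta> * H"
  have r: "0 \<le> r" and k: "0 < k" using H s \<theta> by (simp_all add: r_def k_def)
  have "- \<theta> * s + - k * r = - r" using H by (simp add: k_def r_def field_simps)
  then have D: "exp (- \<theta> * s) * exp (- k * r) = exp (- r)" by (simp only: mult_exp_exp)
  have "c' * exp (- \<theta> * s) * exp (- k * e) \<le> exp (- e)" if "0 \<le> e" "e \<le> r" for e
  proof -
    have "H * e \<le> s" using that H by (simp add: r_def field_simps)
    then have "exp (- \<theta> * (s - H * e)) \<le> 1" using \<theta> by simp
    then have "c' * exp (- \<theta> * (s - H * e)) * exp (- e) \<le> 1 * 1 * exp (- e)"
      using c' by (intro mult_right_mono mult_mono) auto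
    then show ?thesis by (simp add: k_def mult_exp_exp algebra_simps)
  qed
  then have "(\<integral>\<^sup>+e. hit_majorant \<theta> c' (s - H * e) \<partial>density lborel (exponential_density 1))
      = ennreal (1 - exp (- r) - c' * exp (- \<theta> * s) * (1 - exp (- k * r)) / k)"
    using H s k r unfolding nn_integral_exponential_hit_majorant[OF H]
    by (simp only: r_def[symmetric] k_def[symmetric]) (rule nn_integral_exp_diff_Icc)
  also have "\<dots> \<le> ennreal (1 - c * exp (- \<theta> * s))"
    using k r c drift D by (intro ennreal_leI one_minus_exp_drift_le) (auto simp: k_def)
  finally show ?thesis .
qed

lemma nn_integral_exponential_hit_majorant_le_long_hold:
  fixes H \<theta> c c' s :: real
  assumes H: "0 < H" and \<theta>: "1 \<le> \<theta> * H" and c: "c \<le> 1" and c': "0 \<le> c'" and s: "0 \<le> s"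
  shows "(\<integral>\<^sup>+e. hit_majorant \<theta> c' (s - H * e) \<partial>density lborel (exponential_density 1))
       \<le> ennreal (1 - c * exp (- \<theta> * s))"
proof -
  define r where "r = s / H"
  have r: "0 \<le> r" "\<theta> * s = \<theta> * H * r" using H s by (simp_all add: r_def)
  have "(\<integral>\<^sup>+e. hit_majorant \<theta> c' (s - H * e) \<partial>density lborel (exponential_density 1))
      \<le> (\<integral>\<^sup>+e. ennreal (exp (- e) - 0 * exp (- 1 * e)) * indicator {0..r} e \<partial>lborel)"
    unfolding nn_integral_exponential_hit_majorant[OF H] r_def[symmetric]
    using c' by (intro nn_integral_mono mult_right_mono ennreal_leI) auto
  also have "\<dots> = ennreal (1 - exp (- r))"
    using r by (subst nn_integral_exp_diff_Icc) auto
  also have "\<dots> \<le> ennreal (1 - c * exp (- \<theta> * s))"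
  proof (intro ennreal_leI)
    have "1 * r \<le> \<theta> * H * r" using \<theta> r by (intro mult_right_mono) auto
    then have "r \<le> \<theta> * s" using r(2) by linarith
    then have "exp (- \<theta> * s) \<le> exp (- r)" by simp
    moreover have "c * exp (- \<theta> * s) \<le> exp (- \<theta> * s)" using c by simp
    ultimately show "1 - exp (- r) \<le> 1 - c * exp (- \<theta> * s)" by linarith
  qed
  finally show ?thesis .
qed

lemma nn_integral_exponential_hit_majorant_le:
  fixes H \<theta> c c' s :: real
  assumes H: "0 < H" and "0 \<le> \<theta>" "c \<le> 1" "0 \<le> c'" "c' \<le> 1" "c * (1 - \<theta> * H) \<le> c'"
  shows "(\<integral>\<^sup>+e. hit_majorant \<theta> c' (s - H * e) \<partial>density lborel (exponential_density 1))
       \<le> hit_majorant \<theta> c s"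
proof (cases "0 \<le> s")
  case True
  then have "(\<integral>\<^sup>+e. hit_majorant \<theta> c' (s - H * e) \<partial>density lborel (exponential_density 1))
      \<le> ennreal (1 - c * exp (- \<theta> * s))"
    using assms nn_integral_exponential_hit_majorant_le_short_hold
      nn_integral_exponential_hit_majorant_le_long_hold by (cases "\<theta> * H < 1") auto
  then show ?thesis using True by (simp add: hit_majorant_def)
next
  case False
  then have "{0..s / H} = {}" using H by (simp add: divide_less_0_iff)
  then show ?thesis
    unfolding nn_integral_exponential_hit_majorant[OF H] using False by (simp add: hit_majorant_def)
qed

lemma space_ctrw_step_measure [simp]: "space ctrw_step_measure = UNIV"
  by (simp add: ctrw_step_measure_def space_pair_measure)

lemma sets_ctrw_step_measure: "sets ctrw_step_measure = sets (count_space UNIV \<Otimes>\<^sub>M borel)"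
  unfolding ctrw_step_measure_def by (intro sets_pair_measure_cong) auto

lemma prob_space_ctrw_step_measure: "prob_space ctrw_step_measure"
  unfolding ctrw_step_measure_def
  by (intro prob_space_pair prob_space_measure_pmf prob_space_exponential_density) simp

interpretation ctrw: sequence_space ctrw_step_measure
  by (simp add: sequence_space_def product_prob_space_def product_sigma_finite_def
      prob_space_ctrw_step_measure prob_space_imp_sigma_finite product_prob_space_axioms_def)

lemma space_ctrw_space [simp]: "space ctrw_space = UNIV"
  by (simp add: ctrw_space_def space_PiM)

lemma prob_space_ctrw_space: "prob_space ctrw_space"
  unfolding ctrw_space_def by (rule ctrw.P.prob_space_axioms)

lemma measurable_ctrw_coin [measurable]:
  "(\<lambda>\<omega>. fst (\<omega> k)) \<in> measurable ctrw_space (count_space UNIV)"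
  and measurable_ctrw_holding [measurable]: "(\<lambda>\<omega>. snd (\<omega> k)) \<in> borel_measurable ctrw_space"
proof -
  have "(\<lambda>\<omega>. \<omega> k) \<in> measurable ctrw_space ctrw_step_measure"
    unfolding ctrw_space_def by (rule measurable_component_singleton) simp
  moreover have "fst \<in> measurable ctrw_step_measure (count_space UNIV)"
    and "snd \<in> borel_measurable ctrw_step_measure"
    by (simp_all add: measurable_cong_sets[OF sets_ctrw_step_measure refl])
  ultimately show "(\<lambda>\<omega>. fst (\<omega> k)) \<in> measurable ctrw_space (count_space UNIV)"
    and "(\<lambda>\<omega>. snd (\<omega> k)) \<in> borel_measurable ctrw_space"
    by (auto intro: measurable_compose)
qed

lemma measurable_ctrw_chain [measurable]:
  "(\<lambda>\<omega>. ctrw_chain a b x \<omega> n) \<in> measurable ctrw_space (count_space UNIV)"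
proof (induction n)
  case (Suc n)
  show ?case unfolding ctrw_chain.simps
    by (rule measurable_compose_countable'[OF _ Suc]) simp_all
qed simp

lemma measurable_ctrw_jump_time [measurable]:
  "(\<lambda>\<omega>. ctrw_jump_time a b \<sigma> x \<omega> n) \<in> borel_measurable ctrw_space"
  unfolding ctrw_jump_time_def
proof (intro borel_measurable_sum)
  fix k
  show "(\<lambda>\<omega>. ctrw_hold a b \<sigma> (ctrw_chain a b x \<omega> k) (snd (\<omega> k))) \<in> borel_measurable ctrw_space"
    by (rule measurable_compose_countable'[OF _ measurable_ctrw_chain]) (simp_all add: ctrw_hold_def)
qed

lemma nn_integral_ctrw_step_measure_hit_majorant:
  fixes H \<theta> s :: real and f :: "bool \<Rightarrow> real"
  assumes "0 \<le> \<theta>" and "\<And>i. 0 \<le> f i \<and> f i \<le> 1"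
  shows "(\<integral>\<^sup>+x. hit_majorant \<theta> (f (fst x)) (s - H * snd x) \<partial>ctrw_step_measure)
       = (\<integral>\<^sup>+e. hit_majorant \<theta> ((f True + f False) / 2) (s - H * e) \<partial>density lborel (exponential_density 1))"
proof -
  let ?C = "measure_pmf (bernoulli_pmf (1/2))" and ?E = "density lborel (exponential_density 1)"
  interpret pair_sigma_finite ?C ?E
    by (intro pair_sigma_finite.intro prob_space_imp_sigma_finite prob_space_exponential_density
        prob_space_measure_pmf) simp
  have nonneg: "0 \<le> hit_majorant \<theta> (f i) u" for i u
    using assms by (intro hit_majorant_nonneg) auto
  have "(\<integral>\<^sup>+x. hit_majorant \<theta> (f (fst x)) (s - H * snd x) \<partial>ctrw_step_measure)
      = (\<integral>\<^sup>+e. \<integral>\<^sup>+i. hit_majorant \<theta> (f i) (s - H * e) \<partial>?C \<partial>?E)"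
    unfolding ctrw_step_measure_def
    by (subst nn_integral_snd[symmetric])
      (auto intro!: measurable_compose_countable'[where I=UNIV and g=fst] simp: hit_majorant_def
        measurable_cong_sets[OF sets_pair_measure_cong[OF sets_measure_pmf_count_space refl] refl])
  also have "\<dots> = (\<integral>\<^sup>+e. hit_majorant \<theta> ((f True + f False) / 2) (s - H * e) \<partial>?E)"
  proof (intro nn_integral_cong)
    fix e
    let ?h = "\<lambda>i. hit_majorant \<theta> (f i) (s - H * e)"
    have "(\<integral>\<^sup>+i. ?h i \<partial>?C) = ennreal (?h True) * ennreal (1/2) + ennreal (?h False) * ennreal (1 - 1/2)"
      by (rule nn_integral_bernoulli_pmf) auto
    also have "\<dots> = ennreal ((?h True + ?h False) / 2)"
      using nonneg by (simp add: add_divide_distrib ennreal_divide_numeral[symmetric] divide_ennreal_def)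
    finally show "(\<integral>\<^sup>+i. ?h i \<partial>?C) = hit_majorant \<theta> ((f True + f False) / 2) (s - H * e)"
      by (simp only: hit_majorant_midpoint)
  qed
  finally show ?thesis .
qed

lemma emeasure_ctrw_space_first_step:
  assumes A: "A \<in> sets ctrw_space"
  shows "emeasure ctrw_space A = (\<integral>\<^sup>+x. emeasure ctrw_space {\<omega>. case_nat x \<omega> \<in> A} \<partial>ctrw_step_measure)"
proof -
  let ?f = "\<lambda>(s, \<omega>). case_nat s \<omega>"
  have f: "?f \<in> measurable (ctrw_step_measure \<Otimes>\<^sub>M ctrw.S) ctrw.S" by measurable
  have "emeasure ctrw_space A = emeasure (distr (ctrw_step_measure \<Otimes>\<^sub>M ctrw.S) ctrw.S ?f) A"
    unfolding ctrw_space_def ctrw.PiM_iter ..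
  also have "\<dots> = emeasure (ctrw_step_measure \<Otimes>\<^sub>M ctrw.S) (?f -` A \<inter> space (ctrw_step_measure \<Otimes>\<^sub>M ctrw.S))"
    using A by (simp add: emeasure_distr[OF f] ctrw_space_def)
  also have "\<dots> = (\<integral>\<^sup>+x. emeasure ctrw.S (Pair x -` (?f -` A \<inter> space (ctrw_step_measure \<Otimes>\<^sub>M ctrw.S))) \<partial>ctrw_step_measure)"
    using A f by (intro ctrw.emeasure_pair_measure_alt) (simp add: ctrw_space_def)
  also have "\<dots> = (\<integral>\<^sup>+x. emeasure ctrw_space {\<omega>. case_nat x \<omega> \<in> A} \<partial>ctrw_step_measure)"
    by (intro nn_integral_cong arg_cong2[where f=emeasure])
      (auto simp: ctrw_space_def space_pair_measure space_PiM)
  finally show ?thesis .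
qed

lemma ctrw_chain_Suc_shift:
  "ctrw_chain a b x \<omega> (Suc k) = ctrw_chain a b (ctrw_next a b x (fst (\<omega> 0))) (\<lambda>n. \<omega> (Suc n)) k"
  by (induction k) simp_all

lemma ctrw_jump_time_Suc_shift:
  "ctrw_jump_time a b \<sigma> x \<omega> (Suc k) =
     ctrw_hold a b \<sigma> x (snd (\<omega> 0)) + ctrw_jump_time a b \<sigma> (ctrw_next a b x (fst (\<omega> 0))) (\<lambda>n. \<omega> (Suc n)) k"
  unfolding ctrw_jump_time_def sum.lessThan_Suc_shift
  by (simp add: ctrw_chain_Suc_shift del: ctrw_chain.simps(2))

definition ctrw_hit_by_jump ::
  "int \<Rightarrow> int \<Rightarrow> (int \<Rightarrow> real) \<Rightarrow> int \<Rightarrow> int set \<Rightarrow> real \<Rightarrow> nat \<Rightarrow> (nat \<Rightarrow> bool \<times> real) set" where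
  "ctrw_hit_by_jump a b \<sigma> x S t n = {\<omega> \<in> space ctrw_space.
     \<exists>k\<le>n. ctrw_chain a b x \<omega> k \<in> S \<and> ctrw_jump_time a b \<sigma> x \<omega> k \<le> t}"

lemma sets_ctrw_hit_by_jump [measurable]: "ctrw_hit_by_jump a b \<sigma> x S t n \<in> sets ctrw_space"
  unfolding ctrw_hit_by_jump_def by measurable

lemma ctrw_hit_by_jump_Suc_shift:
  assumes "\<not> (y \<in> S \<and> 0 \<le> t)"
  shows "{\<omega>. case_nat x \<omega> \<in> ctrw_hit_by_jump a b \<sigma> y S t (Suc n)} =
     ctrw_hit_by_jump a b \<sigma> (ctrw_next a b y (fst x)) S (t - ctrw_hold a b \<sigma> y (snd x)) n"
proof -
  have ex_le_Suc: "(\<exists>k\<le>Suc n. P k) \<longleftrightarrow> P 0 \<or> (\<exists>k\<le>n. P (Suc k))" for P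
    by (metis Suc_le_mono le0 not0_implies_Suc)
  have "(\<lambda>n. case_nat x \<omega> (Suc n)) = \<omega>" for \<omega> :: "nat \<Rightarrow> bool \<times> real" by simp
  then show ?thesis
    using assms unfolding ctrw_hit_by_jump_def
    by (auto simp only: ex_le_Suc ctrw_chain_Suc_shift ctrw_jump_time_Suc_shift space_ctrw_space
        nat.case ctrw_chain.simps(1) ctrw_jump_time_def[of _ _ _ _ _ 0] lessThan_0 sum.empty)
qed

lemma ctrw_hold_pos: "\<forall>y\<in>{a..b}. 0 < \<sigma> y \<Longrightarrow> y \<in> {a..b} \<Longrightarrow> 0 < e \<Longrightarrow> 0 < ctrw_hold a b \<sigma> y e"
  by (simp add: ctrw_hold_def)

lemma ctrw_next_in_interval: "a < b \<Longrightarrow> y \<in> {a..b} \<Longrightarrow> ctrw_next a b y i \<in> {a..b}"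
  by (auto simp: ctrw_next_def)

text \<open>\<open>ctrw_hold a b \<sigma> y 1\<close> is the mean holding time at \<open>y\<close>.\<close>

definition ctrw_hit_certificate ::
  "int \<Rightarrow> int \<Rightarrow> (int \<Rightarrow> real) \<Rightarrow> int set \<Rightarrow> real \<Rightarrow> (int \<Rightarrow> real) \<Rightarrow> bool" where
  "ctrw_hit_certificate a b \<sigma> S \<theta> c \<longleftrightarrow>
     (\<forall>y\<in>{a..b}. 0 \<le> c y \<and> c y \<le> 1) \<and> (\<forall>y\<in>S. c y = 0) \<and>
     (\<forall>y\<in>{a..b} - S. c y * (1 - \<theta> * ctrw_hold a b \<sigma> y 1)
        \<le> (c (ctrw_next a b y True) + c (ctrw_next a b y False)) / 2)"

lemma emeasure_ctrw_hit_by_jump_Suc_le: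
  assumes ab: "a < b" and \<sigma>: "\<forall>y\<in>{a..b}. 0 < \<sigma> y" and \<theta>: "0 \<le> \<theta>"
    and cert: "ctrw_hit_certificate a b \<sigma> S \<theta> c" and y: "y \<in> {a..b}" and off: "\<not> (y \<in> S \<and> 0 \<le> t)"
    and IH: "\<And>y t. y \<in> {a..b} \<Longrightarrow>
      emeasure ctrw_space (ctrw_hit_by_jump a b \<sigma> y S t n) \<le> hit_majorant \<theta> (c y) t"
  shows "emeasure ctrw_space (ctrw_hit_by_jump a b \<sigma> y S t (Suc n)) \<le> hit_majorant \<theta> (c y) t"
proof -
  let ?H = "ctrw_hold a b \<sigma> y 1" and ?c = "\<lambda>i. c (ctrw_next a b y i)"
  have c: "0 \<le> c y'" "c y' \<le> 1" if "y' \<in> {a..b}" for y'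
    using cert that by (auto simp: ctrw_hit_certificate_def)
  have next_c: "0 \<le> ?c i" "?c i \<le> 1" for i
    using c ctrw_next_in_interval[OF ab y] by auto
  have drift: "c y * (1 - \<theta> * ?H) \<le> (?c True + ?c False) / 2"
  proof (cases "y \<in> S")
    case True
    then have "c y = 0" using cert by (simp add: ctrw_hit_certificate_def)
    then show ?thesis using next_c by simp
  qed (use cert y in \<open>simp add: ctrw_hit_certificate_def\<close>)
  have "emeasure ctrw_space (ctrw_hit_by_jump a b \<sigma> y S t (Suc n))
      = (\<integral>\<^sup>+x. emeasure ctrw_space (ctrw_hit_by_jump a b \<sigma> (ctrw_next a b y (fst x)) S
          (t - ctrw_hold a b \<sigma> y (snd x)) n) \<partial>ctrw_step_measure)"
    by (simp add: emeasure_ctrw_space_first_step[OF sets_ctrw_hit_by_jump]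
        ctrw_hit_by_jump_Suc_shift[OF off])
  also have "\<dots> \<le> (\<integral>\<^sup>+x. hit_majorant \<theta> (?c (fst x)) (t - ?H * snd x) \<partial>ctrw_step_measure)"
    using IH ctrw_next_in_interval[OF ab y] by (intro nn_integral_mono) (simp add: ctrw_hold_def)
  also have "\<dots> = (\<integral>\<^sup>+e. hit_majorant \<theta> ((?c True + ?c False) / 2) (t - ?H * e)
      \<partial>density lborel (exponential_density 1))"
    using \<theta> next_c by (intro nn_integral_ctrw_step_measure_hit_majorant) auto
  also have "\<dots> \<le> hit_majorant \<theta> (c y) t"
    using ctrw_hold_pos[OF \<sigma> y] \<theta> c[OF y] next_c[of True] next_c[of False] drift
    by (intro nn_integral_exponential_hit_majorant_le) auto
  finally show ?thesis .
qed

lemma emeasure_ctrw_hit_by_jump_le: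
  assumes ab: "a < b" and \<sigma>: "\<forall>y\<in>{a..b}. 0 < \<sigma> y" and \<theta>: "0 \<le> \<theta>"
    and cert: "ctrw_hit_certificate a b \<sigma> S \<theta> c" and y: "y \<in> {a..b}"
  shows "emeasure ctrw_space (ctrw_hit_by_jump a b \<sigma> y S t n) \<le> hit_majorant \<theta> (c y) t"
  using y
proof (induction n arbitrary: y t)
  case 0
  show ?case
  proof (cases "y \<in> S \<and> 0 \<le> t")
    case False
    then have "ctrw_hit_by_jump a b \<sigma> y S t 0 = {}"
      by (auto simp: ctrw_hit_by_jump_def ctrw_jump_time_def)
    then show ?thesis by simp
  qed (use cert prob_space.emeasure_le_1[OF prob_space_ctrw_space] in
        \<open>simp add: ctrw_hit_certificate_def hit_majorant_def\<close>)
next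
  case (Suc n)
  show ?case
  proof (cases "y \<in> S \<and> 0 \<le> t")
    case False
    with Suc show ?thesis by (intro emeasure_ctrw_hit_by_jump_Suc_le[OF ab \<sigma> \<theta> cert])
  qed (use cert prob_space.emeasure_le_1[OF prob_space_ctrw_space] in
        \<open>simp add: ctrw_hit_certificate_def hit_majorant_def\<close>)
qed

lemma ctrw_hit_prob_le_hit_majorant:
  assumes ab: "a < b" and \<sigma>: "\<forall>y\<in>{a..b}. 0 < \<sigma> y" and \<theta>: "0 \<le> \<theta>"
    and cert: "ctrw_hit_certificate a b \<sigma> S \<theta> c" and x: "x \<in> {a..b}"
  shows "ctrw_hit_prob a b \<sigma> x S t \<le> hit_majorant \<theta> (c x) t"
proof -
  interpret prob_space ctrw_space by (rule prob_space_ctrw_space)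
  let ?A = "ctrw_hit_by_jump a b \<sigma> x S t"
  have hit: "{\<omega> \<in> space ctrw_space. \<exists>n. ctrw_chain a b x \<omega> n \<in> S \<and> ctrw_jump_time a b \<sigma> x \<omega> n \<le> t}
      = (\<Union>n. ?A n)"
    by (auto simp: ctrw_hit_by_jump_def)
  have "incseq ?A" by (auto simp: incseq_def ctrw_hit_by_jump_def intro: order_trans)
  then have "emeasure ctrw_space (\<Union>n. ?A n) = (SUP n. emeasure ctrw_space (?A n))"
    by (intro SUP_emeasure_incseq[symmetric]) auto
  also have "\<dots> \<le> hit_majorant \<theta> (c x) t"
    using emeasure_ctrw_hit_by_jump_le[OF ab \<sigma> \<theta> cert x] by (intro SUP_least) auto
  finally have "ennreal (measure ctrw_space (\<Union>n. ?A n)) \<le> hit_majorant \<theta> (c x) t"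
    by (simp add: emeasure_eq_measure)
  moreover have "0 \<le> hit_majorant \<theta> (c x) t"
    using cert x \<theta> by (intro hit_majorant_nonneg) (auto simp: ctrw_hit_certificate_def)
  ultimately show ?thesis
    unfolding ctrw_hit_prob_def hit by (simp add: ennreal_le_iff)
qed

lemma ctrw_hit_prob_le_linear:
  assumes "a < b" and "\<forall>y\<in>{a..b}. 0 < \<sigma> y" and \<theta>: "0 \<le> \<theta>"
    and cert: "ctrw_hit_certificate a b \<sigma> S \<theta> c" and x: "x \<in> {a..b}" "c x = 1" and t: "0 \<le> t"
  shows "ctrw_hit_prob a b \<sigma> x S t \<le> \<theta> * t"
proof -
  have "ctrw_hit_prob a b \<sigma> x S t \<le> hit_majorant \<theta> 1 t"
    using ctrw_hit_prob_le_hit_majorant[OF assms(1,2) \<theta> cert x(1)] x(2) by simp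
  also have "\<dots> \<le> \<theta> * t" using \<theta> t by (rule hit_majorant_one_le)
  finally show ?thesis .
qed

lemma drift_by_values:
  fixes c q u v C Q U V :: real
  assumes "c = C" "q = Q" "u = U" "v = V" "C * (1 - Q) \<le> (U + V) / 2"
  shows "c * (1 - q) \<le> (u + v) / 2"
  using assms by simp

lemma drift_affine:
  fixes c q u v e d h :: real
  assumes "c = e / d" "u = (e + h) / d" "v = (e - h) / d" and "0 < d" "0 \<le> e" "0 \<le> q"
  shows "c * (1 - q) \<le> (u + v) / 2"
proof -
  have "0 \<le> e / d * q" using assms by simp
  moreover have "((e + h) / d + (e - h) / d) / 2 = e / d" using assms by (simp add: field_simps)
  ultimately show ?thesis using assms by (simp add: right_diff_distrib)
qed

text \<open>\<open>ramp_weight b z y\<close> and \<open>tent_weight a b x y\<close> are the probabilities that the embedded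
walk started at \<open>y\<close> visits \<open>z\<close> before \<open>b\<close>, resp. \<open>x\<close> before \<open>{a, b}\<close>.\<close>

definition ramp_weight :: "int \<Rightarrow> int \<Rightarrow> int \<Rightarrow> real" where
  "ramp_weight b z y = (if y \<le> z then 1 else real_of_int (b - y) / real_of_int (b - z))"

definition tent_weight :: "int \<Rightarrow> int \<Rightarrow> int \<Rightarrow> int \<Rightarrow> real" where
  "tent_weight a b x y =
     (if y \<le> x then real_of_int (y - a) / real_of_int (x - a) else real_of_int (b - y) / real_of_int (b - x))"

lemma ramp_weight_drift:
  fixes z :: int
  assumes z: "a \<le> z" "z < b" and \<sigma>: "\<forall>y\<in>{a..b}. 0 < \<sigma> y" and y: "y \<in> {a..b}" "y \<noteq> b"
  defines "\<theta> \<equiv> 1 / (2 * real_of_int (b - z) * \<sigma> z)"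
  shows "ramp_weight b z y * (1 - \<theta> * ctrw_hold a b \<sigma> y 1)
      \<le> (ramp_weight b z (ctrw_next a b y True) + ramp_weight b z (ctrw_next a b y False)) / 2"
proof -
  have \<sigma>z: "0 < \<sigma> z" and d: "0 < real_of_int (b - z)" using \<sigma> z by auto
  have \<theta>H: "0 \<le> \<theta> * ctrw_hold a b \<sigma> y 1"
    using ctrw_hold_pos[OF \<sigma> y(1), of 1] \<sigma>z d by (simp add: \<theta>_def)
  consider "y < z" | "y = z" "z = a" | "y = z" "a < z" | "z < y" using y z by linarith
  then show ?thesis
  proof cases
    case 1
    then show ?thesis
      using \<theta>H by (intro drift_affine[where e=1 and d=1 and h=0]) (auto simp: ramp_weight_def ctrw_next_def)
  next
    case 2
    define d where "d = real_of_int (b - a)"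
    have "0 < d" using z by (simp add: d_def)
    show ?thesis
    proof (rule drift_by_values[where C=1 and Q="1 / d" and U="(d - 1) / d" and V="(d - 1) / d"])
      show "1 * (1 - 1 / d) \<le> ((d - 1) / d + (d - 1) / d) / 2"
        using \<open>0 < d\<close> by (simp add: field_simps)
    qed (use 2 z \<sigma>z in \<open>auto simp: \<theta>_def d_def ramp_weight_def ctrw_hold_def ctrw_next_def field_simps\<close>)
  next
    case 3
    define d where "d = real_of_int (b - z)"
    have "0 < d" using z by (simp add: d_def)
    show ?thesis
    proof (rule drift_by_values[where C=1 and Q="1 / (2 * d)" and U="(d - 1) / d" and V=1])
      show "1 * (1 - 1 / (2 * d)) \<le> ((d - 1) / d + 1) / 2"
        using \<open>0 < d\<close> by (simp add: field_simps)
    qed (use 3 z \<sigma>z in \<open>auto simp: \<theta>_def d_def ramp_weight_def ctrw_hold_def ctrw_next_def field_simps\<close>)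
  next
    case 4
    define d e where "d = real_of_int (b - z)" and "e = real_of_int (b - y)"
    have "0 < d" "0 \<le> e" using z y by (simp_all add: d_def e_def)
    then show ?thesis
      using 4 y z \<theta>H
      by (intro drift_affine[where e=e and d=d and h="-1"]) (auto simp: d_def e_def ramp_weight_def ctrw_next_def)
  qed
qed

lemma tent_weight_drift:
  fixes x :: int
  assumes x: "a < x" "x < b" and \<sigma>: "\<forall>y\<in>{a..b}. 0 < \<sigma> y" and y: "y \<in> {a..b}" "y \<notin> {a, b}"
  defines "\<theta> \<equiv> 1 / (real_of_int (min (x - a) (b - x)) * \<sigma> x)"
  shows "tent_weight a b x y * (1 - \<theta> * ctrw_hold a b \<sigma> y 1)
      \<le> (tent_weight a b x (ctrw_next a b y True) + tent_weight a b x (ctrw_next a b y False)) / 2"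
proof -
  define m where "m = real_of_int (min (x - a) (b - x))"
  have \<sigma>x: "0 < \<sigma> x" and m: "1 \<le> m" and xa: "0 < real_of_int (x - a)" and bx: "0 < real_of_int (b - x)"
    using \<sigma> x by (auto simp: m_def)
  have \<theta>H: "0 \<le> \<theta> * ctrw_hold a b \<sigma> y 1"
    using ctrw_hold_pos[OF \<sigma> y(1), of 1] \<sigma>x x by (simp add: \<theta>_def)
  have next_y: "ctrw_next a b y True = y + 1" "ctrw_next a b y False = y - 1"
    using y by (auto simp: ctrw_next_def)
  consider "y < x" | "y = x" | "x < y" by linarith
  then show ?thesis
  proof cases
    case 1
    define d e where "d = real_of_int (x - a)" and "e = real_of_int (y - a)"
    have "0 < d" "0 \<le> e" using x y by (simp_all add: d_def e_def)
    then show ?thesis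
      using 1 \<theta>H
      by (intro drift_affine[where e=e and d=d and h=1]) (auto simp: d_def e_def tent_weight_def next_y)
  next
    case 2
    show ?thesis
    proof (rule drift_by_values[where C=1 and Q="1 / m"
          and U="1 - 1 / real_of_int (b - x)" and V="1 - 1 / real_of_int (x - a)"])
      have "1 / real_of_int (b - x) \<le> 1 / m" "1 / real_of_int (x - a) \<le> 1 / m"
        using m by (auto simp: m_def intro!: divide_left_mono)
      then show "1 * (1 - 1 / m) \<le> (1 - 1 / real_of_int (b - x) + (1 - 1 / real_of_int (x - a))) / 2"
        by simp
    qed (use 2 y \<sigma>x xa bx next_y in \<open>auto simp: \<theta>_def m_def tent_weight_def ctrw_hold_def field_simps\<close>)
  next
    case 3
    define d e where "d = real_of_int (b - x)" and "e = real_of_int (b - y)"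
    have "0 < d" "0 \<le> e" using x y by (simp_all add: d_def e_def)
    moreover have "tent_weight a b x (y - 1) = (e - -1) / d"
    proof -
      have "y - 1 = x \<or> x < y - 1" using 3 by linarith
      then show ?thesis using xa bx by (auto simp: d_def e_def tent_weight_def)
    qed
    ultimately show ?thesis
      using 3 \<theta>H
      by (intro drift_affine[where e=e and d=d and h="-1"]) (auto simp: d_def e_def tent_weight_def next_y)
  qed
qed

lemma ctrw_hit_certificate_ramp_weight:
  fixes z :: int
  assumes "a \<le> z" "z < b" and "\<forall>y\<in>{a..b}. 0 < \<sigma> y"
  shows "ctrw_hit_certificate a b \<sigma> {b} (1 / (2 * real_of_int (b - z) * \<sigma> z)) (ramp_weight b z)"
  unfolding ctrw_hit_certificate_def using assms ramp_weight_drift[OF assms]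
  by (auto simp: ramp_weight_def)

lemma ctrw_hit_certificate_tent_weight:
  fixes x :: int
  assumes "a < x" "x < b" and "\<forall>y\<in>{a..b}. 0 < \<sigma> y"
  shows "ctrw_hit_certificate a b \<sigma> {a, b} (1 / (real_of_int (min (x - a) (b - x)) * \<sigma> x)) (tent_weight a b x)"
  unfolding ctrw_hit_certificate_def using assms tent_weight_drift[OF assms]
  by (auto simp: tent_weight_def field_simps)

theorem proposition2p2:
  fixes a b :: int and \<sigma> :: "int \<Rightarrow> real"
  assumes "a < b"
    and "\<forall>y\<in>{a..b}. 0 < \<sigma> y"
  shows "(\<forall>x z t. a \<le> x \<and> x < b \<and> x \<le> z \<and> z < b \<and> 0 < t \<longrightarrow>
            ctrw_hit_prob a b \<sigma> x {b} t \<le> t / (2 * real_of_int (b - z) * \<sigma> z))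
       \<and> (\<forall>x t. a < x \<and> x < b \<and> 0 < t \<longrightarrow>
            ctrw_hit_prob a b \<sigma> x {a, b} t \<le> t / (real_of_int (min (x - a) (b - x)) * \<sigma> x))"
proof (intro conjI allI impI)
  fix x z :: int and t :: real
  assume xzt: "a \<le> x \<and> x < b \<and> x \<le> z \<and> z < b \<and> 0 < t"
  moreover from xzt have "0 < \<sigma> z" using assms(2) by simp
  ultimately have \<theta>: "0 \<le> 1 / (2 * real_of_int (b - z) * \<sigma> z)" by simp
  have "ctrw_hit_prob a b \<sigma> x {b} t \<le> 1 / (2 * real_of_int (b - z) * \<sigma> z) * t"
    by (rule ctrw_hit_prob_le_linear[OF assms \<theta> ctrw_hit_certificate_ramp_weight])
      (use assms xzt in \<open>auto simp: ramp_weight_def\<close>)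
  then show "ctrw_hit_prob a b \<sigma> x {b} t \<le> t / (2 * real_of_int (b - z) * \<sigma> z)"
    by simp
next
  fix x :: int and t :: real
  assume xt: "a < x \<and> x < b \<and> 0 < t"
  moreover from xt have "0 < \<sigma> x" using assms(2) by simp
  ultimately have \<theta>: "0 \<le> 1 / (real_of_int (min (x - a) (b - x)) * \<sigma> x)" by simp
  have "ctrw_hit_prob a b \<sigma> x {a, b} t \<le> 1 / (real_of_int (min (x - a) (b - x)) * \<sigma> x) * t"
    by (rule ctrw_hit_prob_le_linear[OF assms \<theta> ctrw_hit_certificate_tent_weight])
      (use assms xt in \<open>auto simp: tent_weight_def\<close>)
  then show "ctrw_hit_prob a b \<sigma> x {a, b} t \<le> t / (real_of_int (min (x - a) (b - x)) * \<sigma> x)"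
    by simp
qed

end
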